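(* Let $k\geq 2$ and let $U$ be an $n\times n$ unitary matrix with entries in $\mathcal{R}_{2^k}$. Then \[\det\nolimits_{\mathcal{R}_{2^{k-1}}}(\phi_k(U))=\det\nolimits_{\mathcal{R}_{2^{k-1}}}\big(\phi_k(\det\nolimits_{\mathcal{R}_{2^k}}(U))\big).\]
   Context: $\zeta_n=e^{2\pi i/n}$ and $\mathcal{R}_n$ is the smallest subring of $\mathbb{C}$ containing $1/2$ and $\zeta_n$. For $k\ge2$, every matrix $M$ with entries in $\mathcal{R}_{2^k}$ can be uniquely written as $M=A+B\zeta_{2^k}$ with $A,B$ matrices over $\mathcal{R}_{2^{k-1}}$; define $\phi_k(M)=A\otimes I_2+B\otimes\Lambda_k$, where $\Lambda_k=\begin{bmatrix}0&1\\ \zeta_{2^{k-1}}&0\end{bmatrix}$. In particular for a scalar $u\in\mathcal{R}_{2^k}$, $\phi_k(u)$ is a $2\times 2$ matrix over $\mathcal{R}_{2^{k-1}}$. $\det_R$ denotes the determinant computed over the ring $R$. *)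

theory Defs
  imports Complex_Main "Jordan_Normal_Form.Schur_Decomposition"
begin

definition zeta :: "nat \<Rightarrow> complex" where
  "zeta n = cis (2 * pi / real n)"

inductive_set Rring :: "nat \<Rightarrow> complex set" for n :: nat where
  one: "1 \<in> Rring n"
| half: "1/2 \<in> Rring n"
| zeta: "zeta n \<in> Rring n"
| add: "x \<in> Rring n \<Longrightarrow> y \<in> Rring n \<Longrightarrow> x + y \<in> Rring n"
| neg: "x \<in> Rring n \<Longrightarrow> - x \<in> Rring n"
| mult: "x \<in> Rring n \<Longrightarrow> y \<in> Rring n \<Longrightarrow> x * y \<in> Rring n"

definition mat_over :: "complex set \<Rightarrow> complex mat \<Rightarrow> bool" where
  "mat_over S M \<longleftrightarrow> (\<forall>i < dim_row M. \<forall>j < dim_col M. M $$ (i, j) \<in> S)"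

definition kron :: "complex mat \<Rightarrow> complex mat \<Rightarrow> complex mat" where
  "kron A B = mat (dim_row A * dim_row B) (dim_col A * dim_col B)
     (\<lambda>(i, j). A $$ (i div dim_row B, j div dim_col B) * B $$ (i mod dim_row B, j mod dim_col B))"

definition Lambda :: "nat \<Rightarrow> complex mat" where
  "Lambda k = mat_of_rows_list 2 [[0, 1], [zeta (2^(k-1)), 0]]"

definition phi :: "nat \<Rightarrow> complex mat \<Rightarrow> complex mat" where
  "phi k M = (THE P. \<exists>A B. A \<in> carrier_mat (dim_row M) (dim_col M) \<and>
       B \<in> carrier_mat (dim_row M) (dim_col M) \<and>
       mat_over (Rring (2^(k-1))) A \<and> mat_over (Rring (2^(k-1))) B \<and>
       M = A + zeta (2^k) \<cdot>\<^sub>m B \<and>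
       P = kron A (1\<^sub>m 2) + kron B (Lambda k))"

definition unitary_mat :: "complex mat \<Rightarrow> bool" where
  "unitary_mat U \<longleftrightarrow> U \<in> carrier_mat (dim_row U) (dim_row U) \<and>
     mat_adjoint U * U = 1\<^sub>m (dim_row U) \<and> U * mat_adjoint U = 1\<^sub>m (dim_row U)"

end

theory Submission
  imports Defs "Berlekamp_Zassenhaus.Factor_Bound"
begin

text \<open>Write z for zeta (2^k). Every element of R(2^k) is uniquely a + z b with a, b in
  R(2^(k-1)): existence by induction over R(2^k), using z^2 = zeta (2^(k-1)); uniqueness because
  X^(2^(k-1)) + 1 is irreducible over the rationals (Eisenstein at 2 after X \<mapsto> X + 1), so a
  rational relation P(z^2) + z Q(z^2) = 0 also holds at its other root -z.
  Hence the conjugation a + z b \<mapsto> a - z b is a well-defined ring endomorphism of R(2^k) and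
  commutes with determinants. For M = A + z B, shuffling the rows and columns of
  phi k M = A \<otimes> I + B \<otimes> Lambda k turns it into the block matrix [[A, B], [z^2 B, A]],
  whose determinant is det (A + z B) det (A - z B), i.e. det M times the conjugate of det M.
  Both sides of the theorem therefore equal this product for det U.\<close>

lemma even_choose_two_power:
  assumes "0 < i" "i < 2^j"
  shows "even ((2^j) choose i)"
proof (rule ccontr)
  assume odd: "odd ((2^j) choose i)"
  have "i * ((2^j) choose i) = 2^j * ((2^j - 1) choose (i - 1))"
    using times_binomial_minus1_eq[OF assms(1)] .
  then have "2^j dvd i * ((2^j) choose i)" by simp
  moreover have "coprime ((2::nat)^j) ((2^j) choose i)" using odd by simp
  ultimately have "2^j dvd i" by (simp add: coprime_dvd_mult_left_iff)
  with assms show False by (simp add: nat_dvd_not_less)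
qed

lemma eisenstein_lead_coeff_dvd:
  fixes f g h :: "int poly" and p :: int
  assumes "prime p" and fgh: "f = g * h" and deg: "degree g < degree f"
    and low: "\<forall>i<degree f. p dvd poly.coeff f i" and h0: "\<not> p dvd poly.coeff h 0"
  shows "p dvd lead_coeff f"
proof -
  have "p dvd poly.coeff g i" if "i \<le> degree g" for i
    using that
  proof (induction i rule: less_induct)
    case (less i)
    let ?t = "\<lambda>l. poly.coeff g l * poly.coeff h (i - l)"
    have "poly.coeff f i = ?t i + (\<Sum>l<i. ?t l)"
      by (simp add: fgh coeff_mult atMost_Suc lessThan_Suc_atMost[symmetric])
    moreover have "p dvd poly.coeff f i" using low less.prems deg by simp
    moreover have "p dvd (\<Sum>l<i. ?t l)" using less by (intro dvd_sum) auto
    ultimately have "p dvd poly.coeff g i * poly.coeff h 0" by (simp add: dvd_add_left_iff)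
    with \<open>prime p\<close> h0 show ?case by (simp add: prime_dvd_mult_iff)
  qed
  then show ?thesis by (simp add: fgh lead_coeff_mult)
qed

lemma eisenstein_criterion:
  fixes f :: "int poly" and p :: int
  assumes p: "prime p" and deg: "0 < degree f"
    and low: "\<forall>i<degree f. p dvd poly.coeff f i" and lead: "\<not> p dvd lead_coeff f"
    and const: "\<not> p^2 dvd poly.coeff f 0"
  shows "irreducible\<^sub>d f"
proof (rule irreducible\<^sub>dI[OF deg])
  fix g h :: "int poly"
  assume dg: "degree g < degree f" and dh: "degree h < degree f" and fgh: "f = g * h"
  have "poly.coeff f 0 = poly.coeff g 0 * poly.coeff h 0" by (simp add: fgh coeff_mult_0)
  with const have "\<not> p dvd poly.coeff g 0 \<or> \<not> p dvd poly.coeff h 0"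
    by (auto simp: power2_eq_square intro: mult_dvd_mono)
  then show False
    using eisenstein_lead_coeff_dvd[OF p fgh dg low] lead
      eisenstein_lead_coeff_dvd[OF p fgh[folded mult.commute[of h g]] dh low] by blast
qed

lemma irreducible\<^sub>d_of_pcompose_linear:
  fixes f :: "'a :: idom poly"
  assumes "irreducible\<^sub>d (f \<circ>\<^sub>p [:c, 1:])"
  shows "irreducible\<^sub>d f"
proof (rule irreducible\<^sub>dI)
  show "0 < degree f" using irreducible\<^sub>dD(1)[OF assms] by simp
  fix g h assume "degree g < degree f" "degree h < degree f" and fgh: "f = g * h"
  moreover have "degree (q \<circ>\<^sub>p [:c, 1:]) = degree q" for q :: "'a poly"
    by simp
  moreover have "f \<circ>\<^sub>p [:c, 1:] = (g \<circ>\<^sub>p [:c, 1:]) * (h \<circ>\<^sub>p [:c, 1:])"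
    by (simp add: fgh pcompose_mult)
  ultimately show False
    using irreducible\<^sub>dD(2)[OF assms] by metis
qed

lemma irreducible_X_two_power_plus_one: "irreducible ([:0, 1:] ^ 2^j + 1 :: rat poly)"
proof -
  define f :: "int poly" where "f = [:1, 1:] ^ 2^j + 1"
  have coeff_f: "poly.coeff f i = int (2^j choose i) + (if i = 0 then 1 else 0)" if "i \<le> 2^j" for i
    using that coeff_linear_poly_power[of i "2^j" "1::int" 1] by (simp add: f_def)
  have deg_f: "degree f = 2^j"
    using degree_linear_power[of "1::int" "2^j"] by (simp add: f_def degree_add_eq_left)
  have "irreducible\<^sub>d f"
  proof (rule eisenstein_criterion[of 2])
    show "\<forall>i<degree f. 2 dvd poly.coeff f i"
      using even_choose_two_power coeff_f deg_f by (auto simp: less_imp_le)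
  qed (use coeff_f[of 0] coeff_f[of "2^j"] deg_f in auto)
  moreover have "f = ([:0, 1:] ^ 2^j + 1) \<circ>\<^sub>p [:1, 1:]"
    by (simp add: f_def pcompose_add pcompose_hom.hom_power)
  ultimately have "irreducible\<^sub>d ([:0, 1:] ^ 2^j + 1 :: int poly)"
    using irreducible\<^sub>d_of_pcompose_linear by metis
  from irreducible\<^sub>d_int_rat[OF this] show ?thesis
    by (simp add: of_int_poly_hom.hom_power of_int_poly_hom.hom_add)
qed

interpretation of_rat_poly_hom: map_poly_idom_hom "of_rat :: rat \<Rightarrow> 'a :: field_char_0" ..

lemma irreducible_dvd_of_common_root:
  fixes p q :: "rat poly" and z :: "'a :: field_char_0"
  assumes "irreducible p"
    and "poly (map_poly of_rat p) z = 0" and "poly (map_poly of_rat q) z = 0"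
  shows "p dvd q"
proof (rule ccontr)
  assume "\<not> p dvd q"
  with \<open>irreducible p\<close> have "gcd p q = 1"
    by (simp add: irreducible_imp_prime_elem prime_elem_imp_coprime flip: coprime_iff_gcd_eq_1)
  then have "fst (bezout_coefficients p q) * p + snd (bezout_coefficients p q) * q = 1"
    using bezout_coefficients_fst_snd by metis
  from arg_cong[OF this, of "\<lambda>r. poly (map_poly of_rat r) z"] assms(2,3) show False
    by (simp add: of_rat_hom.map_poly_hom_add of_rat_poly_hom.hom_mult)
qed

lemma poly_even_odd_parts_eq_0:
  fixes P Q :: "rat poly" and z :: "'a :: field_char_0"
  assumes "1 \<le> j" and z: "z ^ 2^j = -1"
    and eq: "poly (map_poly of_rat P) (z^2) + z * poly (map_poly of_rat Q) (z^2) = 0"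
  shows "poly (map_poly of_rat P) (z^2) = 0" and "poly (map_poly of_rat Q) (z^2) = 0"
proof -
  define H where "H = P \<circ>\<^sub>p [:0, 0, 1:] + [:0, 1:] * (Q \<circ>\<^sub>p [:0, 0, 1:])"
  have H: "poly (map_poly of_rat H) x =
      poly (map_poly of_rat P) (x^2) + x * poly (map_poly of_rat Q) (x^2)" for x :: 'a
    by (simp add: H_def of_rat_hom.map_poly_pcompose of_rat_hom.map_poly_hom_add
        of_rat_hom.map_poly_pCons_hom of_rat_poly_hom.hom_mult poly_pcompose power2_eq_square)
  define G :: "rat poly" where "G = [:0, 1:] ^ 2^j + 1"
  have G: "poly (map_poly of_rat G) x = x ^ 2^j + 1" for x :: 'a
    by (simp add: G_def of_rat_hom.map_poly_hom_add of_rat_poly_hom.hom_power)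
  have "G dvd H"
    by (rule irreducible_dvd_of_common_root[of _ z])
      (use irreducible_X_two_power_plus_one H G z eq in \<open>simp_all add: G_def\<close>)
  moreover have "(- z) ^ 2^j = z ^ 2^j" using \<open>1 \<le> j\<close> by simp
  ultimately have "poly (map_poly of_rat H) (- z) = 0"
    using G z by (auto simp: of_rat_poly_hom.hom_mult)
  with H[of "- z"] have "poly (map_poly of_rat P) (z^2) - z * poly (map_poly of_rat Q) (z^2) = 0"
    by simp
  with eq have "2 * poly (map_poly of_rat P) (z^2) = 0" "2 * z * poly (map_poly of_rat Q) (z^2) = 0"
    by (simp_all add: algebra_simps)
  moreover have "z \<noteq> 0" using z by (auto simp: power_0_left)
  ultimately show "poly (map_poly of_rat P) (z^2) = 0" "poly (map_poly of_rat Q) (z^2) = 0"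
    by simp_all
qed

lemma zeta_double_sq: "zeta (2 * n) ^ 2 = zeta n"
  by (simp add: zeta_def DeMoivre)

lemma zeta_double_pow: "0 < n \<Longrightarrow> zeta (2 * n) ^ n = -1"
  by (simp add: zeta_def DeMoivre)

lemma zeta_two_power_sq: "1 \<le> k \<Longrightarrow> zeta (2^k) * zeta (2^k) = zeta (2^(k-1))"
  using zeta_double_sq[of "2^(k-1)"] by (simp add: power2_eq_square flip: power_Suc)

lemma zeta_two_power_mult:
  assumes "1 \<le> k"
  shows "(a + zeta (2^k) * b) * (c + zeta (2^k) * d) =
    (a * c + zeta (2^(k-1)) * (b * d)) + zeta (2^k) * (a * d + b * c)"
proof -
  have "(a + zeta (2^k) * b) * (c + zeta (2^k) * d) =
      (a * c + (zeta (2^k) * zeta (2^k)) * (b * d)) + zeta (2^k) * (a * d + b * c)"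
    by (simp add: algebra_simps)
  then show ?thesis by (simp add: zeta_two_power_sq[OF assms])
qed

lemma Rring_0: "0 \<in> Rring n"
  using Rring.add[OF Rring.one Rring.neg[OF Rring.one]] by simp

lemma Rring_diff: "x \<in> Rring n \<Longrightarrow> y \<in> Rring n \<Longrightarrow> x - y \<in> Rring n"
  using Rring.add[OF _ Rring.neg] by force

lemma Rring_sum: "(\<And>x. x \<in> S \<Longrightarrow> f x \<in> Rring n) \<Longrightarrow> sum f S \<in> Rring n"
  by (induction S rule: infinite_finite_induct) (auto intro: Rring_0 Rring.add)

lemma Rring_prod: "(\<And>x. x \<in> S \<Longrightarrow> f x \<in> Rring n) \<Longrightarrow> prod f S \<in> Rring n"
  by (induction S rule: infinite_finite_induct) (auto intro: Rring.one Rring.mult)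

lemma Rring_signof: "signof p \<in> Rring n"
  by (simp add: sign_def Rring.one Rring.neg)

lemma Rring_det: "M \<in> carrier_mat m m \<Longrightarrow> mat_over (Rring n) M \<Longrightarrow> det M \<in> Rring n"
  unfolding det_def' mat_over_def
  by (fastforce intro!: Rring_sum Rring_prod Rring.mult Rring_signof dest: permutes_in_image)

lemma Rring_eq_poly_zeta: "x \<in> Rring n \<Longrightarrow> \<exists>p. x = poly (map_poly of_rat p) (zeta n)"
proof (induction rule: Rring.induct)
  case one show ?case by (rule exI[of _ 1]) simp
next
  case half show ?case
    by (rule exI[of _ "[:1/2:]"]) (simp add: of_rat_hom.map_poly_pCons_hom of_rat_divide)
next
  case zeta show ?case by (rule exI[of _ "[:0, 1:]"]) (simp add: of_rat_hom.map_poly_pCons_hom)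
next
  case (add x y)
  then obtain p q where "x = poly (map_poly of_rat p) (zeta n)" "y = poly (map_poly of_rat q) (zeta n)"
    by blast
  then show ?case by (intro exI[of _ "p + q"]) (simp add: of_rat_hom.map_poly_hom_add)
next
  case (neg x)
  then obtain p where "x = poly (map_poly of_rat p) (zeta n)" by blast
  then show ?case by (intro exI[of _ "- p"]) (simp add: of_rat_poly_hom.hom_uminus)
next
  case (mult x y)
  then obtain p q where "x = poly (map_poly of_rat p) (zeta n)" "y = poly (map_poly of_rat q) (zeta n)"
    by blast
  then show ?case by (intro exI[of _ "p * q"]) (simp add: of_rat_poly_hom.hom_mult)
qed

lemma Rring_two_power_decomp:
  assumes k: "1 \<le> k" and x: "x \<in> Rring (2^k)"
  obtains a b where "a \<in> Rring (2^(k-1))" "b \<in> Rring (2^(k-1))" "x = a + zeta (2^k) * b"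
proof -
  have "\<exists>a b. a \<in> Rring (2^(k-1)) \<and> b \<in> Rring (2^(k-1)) \<and> x = a + zeta (2^k) * b"
    using x
  proof (induction rule: Rring.induct)
    case zeta
    show ?case by (rule exI[of _ 0], rule exI[of _ 1]) (simp add: Rring_0 Rring.one)
  next
    case (add x y)
    then obtain a b c d where "a \<in> Rring (2^(k-1))" "b \<in> Rring (2^(k-1))" "x = a + zeta (2^k) * b"
      "c \<in> Rring (2^(k-1))" "d \<in> Rring (2^(k-1))" "y = c + zeta (2^k) * d" by blast
    then show ?case
      by (intro exI[of _ "a + c"] exI[of _ "b + d"]) (auto intro: Rring.add simp: algebra_simps)
  next
    case (neg x)
    then obtain a b where "a \<in> Rring (2^(k-1))" "b \<in> Rring (2^(k-1))" "x = a + zeta (2^k) * b"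
      by blast
    then show ?case
      by (intro exI[of _ "- a"] exI[of _ "- b"]) (auto intro: Rring.neg simp: algebra_simps)
  next
    case (mult x y)
    then obtain a b c d where ab: "a \<in> Rring (2^(k-1))" "b \<in> Rring (2^(k-1))" "x = a + zeta (2^k) * b"
      and cd: "c \<in> Rring (2^(k-1))" "d \<in> Rring (2^(k-1))" "y = c + zeta (2^k) * d" by blast
    have "x * y = (a * c + zeta (2^(k-1)) * (b * d)) + zeta (2^k) * (a * d + b * c)"
      unfolding ab(3) cd(3) using k by (rule zeta_two_power_mult)
    moreover have "a * c + zeta (2^(k-1)) * (b * d) \<in> Rring (2^(k-1))" "a * d + b * c \<in> Rring (2^(k-1))"
      using ab cd by (auto intro!: Rring.add Rring.mult Rring.zeta)
    ultimately show ?case by blast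
  qed (use Rring.one Rring.half Rring_0 in \<open>force+\<close>)
  with that show ?thesis by blast
qed

lemma Rring_two_power_decomp_unique:
  assumes k: "2 \<le> k"
    and "a \<in> Rring (2^(k-1))" "b \<in> Rring (2^(k-1))" "c \<in> Rring (2^(k-1))" "d \<in> Rring (2^(k-1))"
    and eq: "a + zeta (2^k) * b = c + zeta (2^k) * d"
  shows "a = c" and "b = d"
proof -
  obtain P Q where P: "a - c = poly (map_poly of_rat P) (zeta (2^(k-1)))"
    and Q: "b - d = poly (map_poly of_rat Q) (zeta (2^(k-1)))"
    using Rring_eq_poly_zeta Rring_diff assms(2-5) by metis
  have sq: "zeta (2^(k-1)) = zeta (2^k) ^ 2"
    using zeta_two_power_sq k by (simp add: power2_eq_square)
  have "zeta (2^k) ^ 2^(k-1) = -1"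
    using zeta_double_pow[of "2^(k-1)"] k by (simp flip: power_Suc)
  moreover have "(a - c) + zeta (2^k) * (b - d) = 0" using eq by (simp add: algebra_simps)
  ultimately have "a - c = 0" "b - d = 0"
    using poly_even_odd_parts_eq_0[of "k-1" "zeta (2^k)" P Q] k unfolding P Q sq by simp_all
  then show "a = c" "b = d" by simp_all
qed

definition zeta_coords :: "nat \<Rightarrow> complex \<Rightarrow> complex \<times> complex" where
  "zeta_coords k x =
     (THE (a, b). a \<in> Rring (2^(k-1)) \<and> b \<in> Rring (2^(k-1)) \<and> x = a + zeta (2^k) * b)"

definition zeta_conj :: "nat \<Rightarrow> complex \<Rightarrow> complex" where
  "zeta_conj k x = fst (zeta_coords k x) - zeta (2^k) * snd (zeta_coords k x)"

lemma zeta_coords_eq: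
  assumes k: "2 \<le> k" and ab: "a \<in> Rring (2^(k-1))" "b \<in> Rring (2^(k-1))"
  shows "zeta_coords k (a + zeta (2^k) * b) = (a, b)"
  unfolding zeta_coords_def
proof (rule the_equality)
  show "case (a, b) of (c, d) \<Rightarrow>
    c \<in> Rring (2^(k-1)) \<and> d \<in> Rring (2^(k-1)) \<and> a + zeta (2^k) * b = c + zeta (2^k) * d"
    using ab by simp
  fix cd :: "complex \<times> complex"
  obtain c d where cd: "cd = (c, d)" by fastforce
  assume "case cd of (c, d) \<Rightarrow>
    c \<in> Rring (2^(k-1)) \<and> d \<in> Rring (2^(k-1)) \<and> a + zeta (2^k) * b = c + zeta (2^k) * d"
  then have "c \<in> Rring (2^(k-1))" "d \<in> Rring (2^(k-1))" "a + zeta (2^k) * b = c + zeta (2^k) * d"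
    by (simp_all add: cd)
  then have "a = c" "b = d" by (rule Rring_two_power_decomp_unique[OF k ab])+
  then show "cd = (a, b)" by (simp add: cd)
qed

lemma zeta_coords:
  assumes k: "2 \<le> k" and x: "x \<in> Rring (2^k)"
  shows "fst (zeta_coords k x) \<in> Rring (2^(k-1))" "snd (zeta_coords k x) \<in> Rring (2^(k-1))"
    and "x = fst (zeta_coords k x) + zeta (2^k) * snd (zeta_coords k x)"
proof -
  have "1 \<le> k" using k by simp
  then obtain a b where "a \<in> Rring (2^(k-1))" "b \<in> Rring (2^(k-1))" "x = a + zeta (2^k) * b"
    using x by (rule Rring_two_power_decomp)
  with zeta_coords_eq[OF k] show
    "fst (zeta_coords k x) \<in> Rring (2^(k-1))" "snd (zeta_coords k x) \<in> Rring (2^(k-1))"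
    "x = fst (zeta_coords k x) + zeta (2^k) * snd (zeta_coords k x)" by simp_all
qed

lemma zeta_conj_eq:
  assumes "2 \<le> k" "a \<in> Rring (2^(k-1))" "b \<in> Rring (2^(k-1))"
  shows "zeta_conj k (a + zeta (2^k) * b) = a - zeta (2^k) * b"
  by (simp add: zeta_conj_def zeta_coords_eq[OF assms])

lemma zeta_conj_add:
  assumes k: "2 \<le> k" and x: "x \<in> Rring (2^k)" and y: "y \<in> Rring (2^k)"
  shows "zeta_conj k (x + y) = zeta_conj k x + zeta_conj k y"
proof -
  have "1 \<le> k" using k by simp
  obtain a b c d where ab: "a \<in> Rring (2^(k-1))" "b \<in> Rring (2^(k-1))" "x = a + zeta (2^k) * b"
    and cd: "c \<in> Rring (2^(k-1))" "d \<in> Rring (2^(k-1))" "y = c + zeta (2^k) * d"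
    using Rring_two_power_decomp[OF \<open>1 \<le> k\<close>] x y by metis
  have "x + y = (a + c) + zeta (2^k) * (b + d)" using ab cd by (simp add: algebra_simps)
  then have "zeta_conj k (x + y) = (a + c) - zeta (2^k) * (b + d)"
    using ab(1,2) cd(1,2) by (simp add: zeta_conj_eq[OF k] Rring.add)
  moreover have "zeta_conj k x = a - zeta (2^k) * b" "zeta_conj k y = c - zeta (2^k) * d"
    using ab cd by (simp_all add: zeta_conj_eq[OF k])
  ultimately show ?thesis by (simp only:) (simp add: algebra_simps)
qed

lemma zeta_conj_mult:
  assumes k: "2 \<le> k" and x: "x \<in> Rring (2^k)" and y: "y \<in> Rring (2^k)"
  shows "zeta_conj k (x * y) = zeta_conj k x * zeta_conj k y"
proof -
  have "1 \<le> k" using k by simp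
  obtain a b c d where ab: "a \<in> Rring (2^(k-1))" "b \<in> Rring (2^(k-1))" "x = a + zeta (2^k) * b"
    and cd: "c \<in> Rring (2^(k-1))" "d \<in> Rring (2^(k-1))" "y = c + zeta (2^k) * d"
    using Rring_two_power_decomp[OF \<open>1 \<le> k\<close>] x y by metis
  have "x * y = (a * c + zeta (2^(k-1)) * (b * d)) + zeta (2^k) * (a * d + b * c)"
    unfolding ab(3) cd(3) using \<open>1 \<le> k\<close> by (rule zeta_two_power_mult)
  moreover have "a * c + zeta (2^(k-1)) * (b * d) \<in> Rring (2^(k-1))" "a * d + b * c \<in> Rring (2^(k-1))"
    using ab cd by (auto intro!: Rring.add Rring.mult Rring.zeta)
  ultimately have "zeta_conj k (x * y) = (a * c + zeta (2^(k-1)) * (b * d)) - zeta (2^k) * (a * d + b * c)"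
    by (simp only: zeta_conj_eq[OF k])
  also have "\<dots> = (a - zeta (2^k) * b) * (c - zeta (2^k) * d)"
    unfolding zeta_two_power_sq[OF \<open>1 \<le> k\<close>, symmetric] by (simp add: algebra_simps)
  also have "\<dots> = zeta_conj k x * zeta_conj k y"
    using ab cd by (simp add: zeta_conj_eq[OF k])
  finally show ?thesis .
qed

lemma zeta_conj_one: "2 \<le> k \<Longrightarrow> zeta_conj k 1 = 1"
  using zeta_conj_eq[OF _ Rring.one Rring_0] by simp

lemma det_map_mat_Rring_hom:
  fixes f :: "complex \<Rightarrow> complex"
  assumes M: "M \<in> carrier_mat m m" "mat_over (Rring n) M"
    and add: "\<And>x y. x \<in> Rring n \<Longrightarrow> y \<in> Rring n \<Longrightarrow> f (x + y) = f x + f y"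
    and mult: "\<And>x y. x \<in> Rring n \<Longrightarrow> y \<in> Rring n \<Longrightarrow> f (x * y) = f x * f y"
    and one: "f 1 = 1"
  shows "f (det M) = det (map_mat f M)"
proof -
  have f_sum: "f (sum g S) = (\<Sum>x\<in>S. f (g x))" if "\<And>x. x \<in> S \<Longrightarrow> g x \<in> Rring n" for g S
    using that
  proof (induction S rule: infinite_finite_induct)
    have "f 0 = 0" using add[OF Rring_0 Rring_0] by simp
    then show "f (sum g S) = (\<Sum>x\<in>S. f (g x))" if "infinite S" for S using that by simp
    show "f (sum g {}) = (\<Sum>x\<in>{}. f (g x))" using \<open>f 0 = 0\<close> by simp
  qed (simp add: add Rring_sum)
  have f_prod: "f (prod g S) = (\<Prod>x\<in>S. f (g x))" if "\<And>x. x \<in> S \<Longrightarrow> g x \<in> Rring n" for g S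
    using that by (induction S rule: infinite_finite_induct) (simp_all add: one mult Rring_prod)
  have "f 1 + f (-1) = f 0" using add[OF Rring.one Rring.neg[OF Rring.one]] by simp
  then have "f (-1) = -1" using add[OF Rring_0 Rring_0] one by (simp add: eq_neg_iff_add_eq_0 add.commute)
  then have f_signof: "f (signof p) = signof p" for p
    using one by (simp add: sign_def)
  have entries: "M $$ (i, p i) \<in> Rring n" if "p permutes {0..<m}" "i < m" for p i
    using M that by (auto simp: mat_over_def permutes_in_image)
  have "f (det M) = (\<Sum>p | p permutes {0..<m}. f (signof p * (\<Prod>i = 0..<m. M $$ (i, p i))))"
    unfolding det_def'[OF M(1)]
    by (rule f_sum) (auto intro!: Rring.mult Rring_signof Rring_prod entries)
  also have "\<dots> = (\<Sum>p | p permutes {0..<m}. signof p * (\<Prod>i = 0..<m. f (M $$ (i, p i))))"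
  proof (rule sum.cong)
    fix p assume "p \<in> {p. p permutes {0..<m}}"
    then have row: "\<And>i. i \<in> {0..<m} \<Longrightarrow> M $$ (i, p i) \<in> Rring n" by (simp add: entries)
    have "f (signof p * (\<Prod>i = 0..<m. M $$ (i, p i))) = f (signof p) * f (\<Prod>i = 0..<m. M $$ (i, p i))"
      using row by (intro mult Rring_signof Rring_prod)
    also have "\<dots> = signof p * (\<Prod>i = 0..<m. f (M $$ (i, p i)))"
      by (simp only: f_signof f_prod[OF row])
    finally show "f (signof p * (\<Prod>i = 0..<m. M $$ (i, p i))) = signof p * (\<Prod>i = 0..<m. f (M $$ (i, p i)))" .
  qed simp
  also have "\<dots> = det (map_mat f M)"
    using M(1) by (auto simp: det_def' intro!: sum.cong prod.cong arg_cong2[where f = "(*)"]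
        dest: permutes_in_image)
  finally show ?thesis .
qed

definition riffle :: "nat \<Rightarrow> nat \<Rightarrow> nat" where
  "riffle n i = (if i < n then 2 * i else if i < n + n then 2 * (i - n) + 1 else i)"

lemma riffle_permutes: "riffle n permutes {0..<n + n}"
proof (rule bij_imp_permutes)
  have "inj_on (riffle n) {0..<n + n}"
    by (rule inj_onI) (auto simp: riffle_def split: if_splits; presburger)
  moreover have "riffle n ` {0..<n + n} \<subseteq> {0..<n + n}" by (auto simp: riffle_def)
  ultimately show "bij_betw (riffle n) {0..<n + n} {0..<n + n}"
    by (simp add: bij_betw_def endo_inj_surj)
qed (simp add: riffle_def)

lemma det_permute_rows_cols:
  fixes A :: "'a :: comm_ring_1 mat"
  assumes A: "A \<in> carrier_mat n n" and p: "p permutes {0..<n}"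
  shows "det (mat n n (\<lambda>(i, j). A $$ (p i, p j))) = det A"
proof -
  define B where "B = mat n n (\<lambda>(i, j). A $$ (p i, j))"
  have B: "B \<in> carrier_mat n n" by (simp add: B_def)
  have p_less: "p i < n" if "i < n" for i using permutes_in_image[OF p] that by simp
  have "mat n n (\<lambda>(i, j). A $$ (p i, p j)) = transpose_mat (mat n n (\<lambda>(i, j). transpose_mat B $$ (p i, j)))"
    by (rule eq_matI) (auto simp: B_def p_less)
  also have "det \<dots> = signof p * det (transpose_mat B)"
    by (simp add: det_transpose[OF mat_carrier] det_permute_rows[OF _ p] B)
  also have "\<dots> = signof p * signof p * det A"
    using det_permute_rows[OF A p] det_transpose[OF B] by (simp add: B_def)
  finally show ?thesis by (simp add: sign_def)
qed

lemma det_four_block_scaled: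
  fixes A B :: "'a :: idom mat"
  assumes A: "A \<in> carrier_mat n n" and B: "B \<in> carrier_mat n n"
  shows "det (four_block_mat A B ((c * c) \<cdot>\<^sub>m B) A) = det (A + c \<cdot>\<^sub>m B) * det (A - c \<cdot>\<^sub>m B)"
proof -
  define L where "L = four_block_mat (1\<^sub>m n) (0\<^sub>m n n) (c \<cdot>\<^sub>m 1\<^sub>m n) (1\<^sub>m n)"
  define F where "F = four_block_mat A B ((c * c) \<cdot>\<^sub>m B) A"
  have L: "L \<in> carrier_mat (n + n) (n + n)" by (simp add: L_def)
  have F: "F \<in> carrier_mat (n + n) (n + n)" using A B by (simp add: F_def)
  have unit_col: "unit_vec n i \<bullet> col B j = B $$ (i, j)" if "i < n" "j < n" for i j
    using B that by simp
  have "det L = 1"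
    unfolding L_def by (subst det_four_block_mat_upper_right_zero[of _ n _ n]) auto
  then have "det F = det (L * F)" by (simp add: det_mult[OF L F])
  \<comment> \<open>adding c times the first block row to the second makes the lower blocks commute\<close>
  also have "L * F = four_block_mat A B (c \<cdot>\<^sub>m (A + c \<cdot>\<^sub>m B)) (A + c \<cdot>\<^sub>m B)"
    unfolding L_def F_def using A B
    by (subst mult_four_block_mat[of _ n n _ n _ n]) (auto intro!: eq_matI simp: algebra_simps unit_col)
  also have "det \<dots> = det (A * (A + c \<cdot>\<^sub>m B) - B * (c \<cdot>\<^sub>m (A + c \<cdot>\<^sub>m B)))"
    using A B by (intro det_four_block_mat) (auto simp: mult_smult_distrib mult_smult_assoc_mat)
  also have "A * (A + c \<cdot>\<^sub>m B) - B * (c \<cdot>\<^sub>m (A + c \<cdot>\<^sub>m B)) = (A - c \<cdot>\<^sub>m B) * (A + c \<cdot>\<^sub>m B)"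
    using A B by (intro eq_matI) (auto simp: scalar_prod_def sum_subtractf sum_distrib_left algebra_simps)
  also have "det \<dots> = det (A - c \<cdot>\<^sub>m B) * det (A + c \<cdot>\<^sub>m B)"
    using A B by (intro det_mult[of _ n]) auto
  finally show ?thesis by (simp add: F_def)
qed

lemma Lambda_index:
  "a < 2 \<Longrightarrow> b < 2 \<Longrightarrow> Lambda k $$ (a, b) =
     (if a = 0 then (if b = 0 then 0 else 1) else (if b = 0 then zeta (2^(k-1)) else 0))"
  by (auto simp: Lambda_def mat_of_rows_list_def less_2_cases_iff)

lemma dim_Lambda [simp]: "dim_row (Lambda k) = 2" "dim_col (Lambda k) = 2"
  by (simp_all add: Lambda_def mat_of_rows_list_def)

lemma det_kron_Lambda:
  assumes A: "A \<in> carrier_mat n n" and B: "B \<in> carrier_mat n n" and c: "c * c = zeta (2^(k-1))"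
  shows "det (kron A (1\<^sub>m 2) + kron B (Lambda k)) = det (A + c \<cdot>\<^sub>m B) * det (A - c \<cdot>\<^sub>m B)"
proof -
  define P where "P = kron A (1\<^sub>m 2) + kron B (Lambda k)"
  have P: "P \<in> carrier_mat (n + n) (n + n)"
    using A B by (auto simp: P_def kron_def)
  have P_index: "P $$ (i, j) = A $$ (i div 2, j div 2) * (if i mod 2 = j mod 2 then 1 else 0)
      + B $$ (i div 2, j div 2) * Lambda k $$ (i mod 2, j mod 2)" if "i < n + n" "j < n + n" for i j
    using that A B by (auto simp: P_def kron_def)
  \<comment> \<open>reordering rows and columns as 0, 2, 4, ..., 1, 3, 5, ... exposes the 2 x 2 block structure\<close>
  have "four_block_mat A B ((c * c) \<cdot>\<^sub>m B) A = mat (n + n) (n + n) (\<lambda>(i, j). P $$ (riffle n i, riffle n j))"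
  proof (rule eq_matI)
    fix i j assume "i < dim_row (mat (n + n) (n + n) (\<lambda>(i, j). P $$ (riffle n i, riffle n j)))"
      "j < dim_col (mat (n + n) (n + n) (\<lambda>(i, j). P $$ (riffle n i, riffle n j)))"
    then have ij: "i < n + n" "j < n + n" by simp_all
    then have "riffle n i < n + n" "riffle n j < n + n" by (auto simp: riffle_def)
    from P_index[OF this] ij A B c show "four_block_mat A B ((c * c) \<cdot>\<^sub>m B) A $$ (i, j) =
        mat (n + n) (n + n) (\<lambda>(i, j). P $$ (riffle n i, riffle n j)) $$ (i, j)"
      by (auto simp: riffle_def Lambda_index)
  qed (use A B in auto)
  then have "det (four_block_mat A B ((c * c) \<cdot>\<^sub>m B) A) = det P"
    using det_permute_rows_cols[OF P riffle_permutes] by simp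
  then show ?thesis using det_four_block_scaled[OF A B, of c] by (simp add: P_def)
qed

lemma phi_eq_kron:
  assumes k: "2 \<le> k" and M: "M \<in> carrier_mat n n" "mat_over (Rring (2^k)) M"
  defines "A \<equiv> map_mat (\<lambda>x. fst (zeta_coords k x)) M"
    and "B \<equiv> map_mat (\<lambda>x. snd (zeta_coords k x)) M"
  shows "phi k M = kron A (1\<^sub>m 2) + kron B (Lambda k)"
proof -
  have entries: "M $$ (i, j) \<in> Rring (2^k)" if "i < n" "j < n" for i j
    using M that by (auto simp: mat_over_def)
  have decomp: "A \<in> carrier_mat n n \<and> B \<in> carrier_mat n n \<and>
      mat_over (Rring (2^(k-1))) A \<and> mat_over (Rring (2^(k-1))) B \<and> M = A + zeta (2^k) \<cdot>\<^sub>m B"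
    using M(1) zeta_coords[OF k entries]
    by (auto simp: A_def B_def mat_over_def intro!: eq_matI)
  have unique: "A' = A \<and> B' = B"
    if "A' \<in> carrier_mat n n" "B' \<in> carrier_mat n n"
      "mat_over (Rring (2^(k-1))) A'" "mat_over (Rring (2^(k-1))) B'" "M = A' + zeta (2^k) \<cdot>\<^sub>m B'"
    for A' B'
  proof -
    have "zeta_coords k (M $$ (i, j)) = (A' $$ (i, j), B' $$ (i, j))" if "i < n" "j < n" for i j
      using that zeta_coords_eq[OF k, of "A' $$ (i, j)" "B' $$ (i, j)"] \<open>M = _\<close>
        \<open>A' \<in> _\<close> \<open>B' \<in> _\<close> \<open>mat_over _ A'\<close> \<open>mat_over _ B'\<close>
      by (simp add: mat_over_def)
    then show ?thesis
      using M(1) \<open>A' \<in> _\<close> \<open>B' \<in> _\<close> by (auto simp: A_def B_def intro!: eq_matI)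
  qed
  have dim: "dim_row M = n" "dim_col M = n" using M(1) by auto
  show ?thesis
    unfolding phi_def dim
  proof (rule the_equality, goal_cases)
    case 1
    show ?case using decomp by (intro exI[of _ A] exI[of _ B]) simp
  next
    case (2 P)
    then show ?case using unique by (elim exE conjE) simp
  qed
qed

lemma det_phi:
  assumes k: "2 \<le> k" and M: "M \<in> carrier_mat n n" "mat_over (Rring (2^k)) M"
  shows "det (phi k M) = det M * zeta_conj k (det M)"
proof -
  define A where "A = map_mat (\<lambda>x. fst (zeta_coords k x)) M"
  define B where "B = map_mat (\<lambda>x. snd (zeta_coords k x)) M"
  have entries: "M $$ (i, j) \<in> Rring (2^k)" if "i < n" "j < n" for i j
    using M that by (auto simp: mat_over_def)
  have A: "A \<in> carrier_mat n n" and B: "B \<in> carrier_mat n n" using M(1) by (simp_all add: A_def B_def)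
  have sq: "zeta (2^k) * zeta (2^k) = zeta (2^(k-1))" using k by (simp add: zeta_two_power_sq)
  have "det (phi k M) = det (A + zeta (2^k) \<cdot>\<^sub>m B) * det (A - zeta (2^k) \<cdot>\<^sub>m B)"
    unfolding phi_eq_kron[OF k M, folded A_def B_def] by (rule det_kron_Lambda[OF A B sq])
  also have "A + zeta (2^k) \<cdot>\<^sub>m B = M"
    using M(1) zeta_coords(3)[OF k entries] by (auto simp: A_def B_def intro!: eq_matI)
  also have "A - zeta (2^k) \<cdot>\<^sub>m B = map_mat (zeta_conj k) M"
    using M(1) by (auto simp: A_def B_def zeta_conj_def intro!: eq_matI)
  also have "det (map_mat (zeta_conj k) M) = zeta_conj k (det M)"
    using M zeta_conj_add[OF k] zeta_conj_mult[OF k] zeta_conj_one[OF k]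
    by (intro det_map_mat_Rring_hom[symmetric])
  finally show ?thesis .
qed

theorem corollary5p2:
  fixes k n :: nat and U :: "complex mat"
  assumes "k \<ge> 2"
    and "U \<in> carrier_mat n n"
    and "unitary_mat U"
    and "mat_over (Rring (2^k)) U"
  shows "det (phi k U) = det (phi k (mat 1 1 (\<lambda>_. det U)))"
proof -
  let ?D = "mat 1 1 (\<lambda>_. det U)"
  have "det U \<in> Rring (2^k)" using assms(2,4) by (rule Rring_det)
  then have "mat_over (Rring (2^k)) ?D" by (simp add: mat_over_def)
  moreover have "det ?D = det U" by (simp add: det_single)
  ultimately show ?thesis
    using det_phi[OF assms(1) assms(2,4)] det_phi[OF assms(1), of ?D 1] by simp
qed

end
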